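(* Let $Z$ be a decision structure. Every quotient graph in the module decomposition of $Z$ is either prime or a directed path with at least three nodes all of whose arcs carry the same label.
   Context: A decision structure is a finite directed acyclic graph $Z=(N,A)$, $A\subseteq N\times N$, with a unique source, together with an arc labelling $\ell:A\to\mathcal{R}$ (into a set $\mathcal{R}$ of return values) and a node labelling by actions, such that distinct arcs leaving the same node have distinct labels; the arc out of $v$ labelled $r$, if it exists, is the $r$-arc out of $v$. For $X\subseteq N$, $Z[X]$ is the induced subgraph with inherited labels. A subset $X\subseteq N(Z)$ is a module of $Z$ if $Z[X]$ has a unique source and for every node $v\notin X$: (i) every arc from $v$ to a node of $X$ ends at the source of $Z[X]$; (ii) if for some $x\in X$ there is an arc from $x$ to $v$ labelled $r$, then every $x'\in X$ has an $r$-arc, and it ends either at $v$ or in $X$. Modules $N(Z)$ and $\{v\}$ are trivial; $Z$ is prime if all its modules are trivial. A module is maximal if it is a proper subset of $N(Z)$ contained in no module other than itself and $N(Z)$. A modular partition is a partition of $N(Z)$ into modules; it is maximal if all blocks are maximal modules. For a partition $P$ of $N(Z)$, the quotient $Z/P$ has node set $P$ and an arc $(S,T)$, $S\neq T$, labelled $r$ whenever some $r$-labelled arc goes from $S$ to $T$; the $Z[S]$, $S\in P$, are the factors. A directed path with $m$ nodes has nodes $u_1,\dots,u_m$ and arcs exactly $(u_i,u_{i+1})$; its length is $m-1$. Module decomposition: for $Z$ with at least two nodes, exactly one of the following holds: (1) $Z$ has a unique maximal partition; (2) there is a unique modular partition $P$ such that $Z/P$ is a directed path with at least three nodes whose arcs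 all carry the same label and whose length is maximal among modular partitions $R$ with $Z/R$ a path. Let $P$ be the partition of (1) or (2) accordingly. The module decomposition of $Z$ consists of the quotient $Z/P$ together with (recursively) the module decompositions of all factors $Z[S]$, $S\in P$, with at least two nodes; a one-node structure has empty decomposition. The quotient graphs in the module decomposition are all the quotients produced in this recursion. *)

theory Defs
  imports Main
begin

text \<open>A labelled directed graph: a node set together with a set of labelled arcs
  (u, r, v), meaning an arc from u to v carrying return value r.\<close>

type_synonym ('n, 'r) lgraph = "'n set \<times> ('n \<times> 'r \<times> 'n) set"

definition nodes :: "('n, 'r) lgraph \<Rightarrow> 'n set" where
  "nodes Z = fst Z"

definition larcs :: "('n, 'r) lgraph \<Rightarrow> ('n \<times> 'r \<times> 'n) set" where
  "larcs Z = snd Z"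

definition arcs :: "('n, 'r) lgraph \<Rightarrow> ('n \<times> 'n) set" where
  "arcs Z = {(u, v). \<exists>r. (u, r, v) \<in> larcs Z}"

definition is_source :: "('n, 'r) lgraph \<Rightarrow> 'n \<Rightarrow> bool" where
  "is_source Z s \<longleftrightarrow> s \<in> nodes Z \<and> (\<forall>u. (u, s) \<notin> arcs Z)"

definition unique_source :: "('n, 'r) lgraph \<Rightarrow> bool" where
  "unique_source Z \<longleftrightarrow> (\<exists>!s. is_source Z s)"

definition source :: "('n, 'r) lgraph \<Rightarrow> 'n" where
  "source Z = (THE s. is_source Z s)"

text \<open>Decision structure (node labelling by actions is irrelevant here and omitted):
  finite DAG with unique source; the labelling is a function on arcs
  (one label per arc); distinct arcs leaving a node carry distinct labels.\<close>
definition decision_structure :: "('n, 'r) lgraph \<Rightarrow> bool" where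
  "decision_structure Z \<longleftrightarrow>
     finite (nodes Z) \<and>
     (\<forall>(u, r, v) \<in> larcs Z. u \<in> nodes Z \<and> v \<in> nodes Z) \<and>
     acyclic (arcs Z) \<and>
     unique_source Z \<and>
     (\<forall>u v r r'. (u, r, v) \<in> larcs Z \<longrightarrow> (u, r', v) \<in> larcs Z \<longrightarrow> r = r') \<and>
     (\<forall>u v w r. (u, r, v) \<in> larcs Z \<longrightarrow> (u, r, w) \<in> larcs Z \<longrightarrow> v = w)"

definition induced :: "('n, 'r) lgraph \<Rightarrow> 'n set \<Rightarrow> ('n, 'r) lgraph" where
  "induced Z X = (X, {(u, r, v) \<in> larcs Z. u \<in> X \<and> v \<in> X})"

definition is_module :: "('n, 'r) lgraph \<Rightarrow> 'n set \<Rightarrow> bool" where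
  "is_module Z X \<longleftrightarrow>
     X \<subseteq> nodes Z \<and> unique_source (induced Z X) \<and>
     (\<forall>v \<in> nodes Z - X.
        (\<forall>x \<in> X. (v, x) \<in> arcs Z \<longrightarrow> x = source (induced Z X)) \<and>
        (\<forall>x \<in> X. \<forall>r. (x, r, v) \<in> larcs Z \<longrightarrow>
            (\<forall>x' \<in> X. (\<exists>w. (x', r, w) \<in> larcs Z) \<and>
                       (\<forall>w. (x', r, w) \<in> larcs Z \<longrightarrow> w = v \<or> w \<in> X))))"

definition trivial_module :: "('n, 'r) lgraph \<Rightarrow> 'n set \<Rightarrow> bool" where
  "trivial_module Z X \<longleftrightarrow> X = nodes Z \<or> (\<exists>v \<in> nodes Z. X = {v})"

definition prime :: "('n, 'r) lgraph \<Rightarrow> bool" where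
  "prime Z \<longleftrightarrow> (\<forall>X. is_module Z X \<longrightarrow> trivial_module Z X)"

definition maximal_module :: "('n, 'r) lgraph \<Rightarrow> 'n set \<Rightarrow> bool" where
  "maximal_module Z X \<longleftrightarrow>
     is_module Z X \<and> X \<subset> nodes Z \<and>
     (\<forall>Y. is_module Z Y \<longrightarrow> X \<subseteq> Y \<longrightarrow> Y = X \<or> Y = nodes Z)"

definition is_partition :: "'n set \<Rightarrow> 'n set set \<Rightarrow> bool" where
  "is_partition N P \<longleftrightarrow>
     (\<forall>S \<in> P. S \<noteq> {}) \<and> \<Union>P = N \<and>
     (\<forall>S \<in> P. \<forall>T \<in> P. S \<noteq> T \<longrightarrow> S \<inter> T = {})"

definition modular_partition :: "('n, 'r) lgraph \<Rightarrow> 'n set set \<Rightarrow> bool" where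
  "modular_partition Z P \<longleftrightarrow> is_partition (nodes Z) P \<and> (\<forall>S \<in> P. is_module Z S)"

definition maximal_partition :: "('n, 'r) lgraph \<Rightarrow> 'n set set \<Rightarrow> bool" where
  "maximal_partition Z P \<longleftrightarrow> is_partition (nodes Z) P \<and> (\<forall>S \<in> P. maximal_module Z S)"

definition quotient :: "('n, 'r) lgraph \<Rightarrow> 'n set set \<Rightarrow> ('n set, 'r) lgraph" where
  "quotient Z P = (P, {(S, r, T). S \<in> P \<and> T \<in> P \<and> S \<noteq> T \<and>
                         (\<exists>u \<in> S. \<exists>v \<in> T. (u, r, v) \<in> larcs Z)})"

definition is_path :: "('n, 'r) lgraph \<Rightarrow> bool" where
  "is_path Z \<longleftrightarrow> (\<exists>us. distinct us \<and> set us = nodes Z \<and>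
      arcs Z = {(us ! i, us ! Suc i) | i. Suc i < length us})"

definition uniform_path3 :: "('n, 'r) lgraph \<Rightarrow> bool" where
  "uniform_path3 Z \<longleftrightarrow> (\<exists>us r. distinct us \<and> set us = nodes Z \<and> length us \<ge> 3 \<and>
      larcs Z = {(us ! i, r, us ! Suc i) | i. Suc i < length us})"

definition case1_partition :: "('n, 'r) lgraph \<Rightarrow> 'n set set \<Rightarrow> bool" where
  "case1_partition Z P \<longleftrightarrow> maximal_partition Z P \<and> (\<forall>P'. maximal_partition Z P' \<longrightarrow> P' = P)"

text \<open>Modular partition P with Z/P a same-label path on at least 3 nodes, of maximal
  length among modular partitions R with Z/R a path (length = number of nodes - 1).\<close>
definition path_candidate :: "('n, 'r) lgraph \<Rightarrow> 'n set set \<Rightarrow> bool" where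
  "path_candidate Z P \<longleftrightarrow> modular_partition Z P \<and> uniform_path3 (quotient Z P) \<and>
     (\<forall>R. modular_partition Z R \<longrightarrow> is_path (quotient Z R) \<longrightarrow> card R \<le> card P)"

definition case2_partition :: "('n, 'r) lgraph \<Rightarrow> 'n set set \<Rightarrow> bool" where
  "case2_partition Z P \<longleftrightarrow> path_candidate Z P \<and> (\<forall>P'. path_candidate Z P' \<longrightarrow> P' = P)"

definition decomp_partition :: "('n, 'r) lgraph \<Rightarrow> 'n set set \<Rightarrow> bool" where
  "decomp_partition Z P \<longleftrightarrow>
     (if \<exists>P'. case1_partition Z P' then case1_partition Z P else case2_partition Z P)"

inductive decomp_quotient :: "('n, 'r) lgraph \<Rightarrow> ('n set, 'r) lgraph \<Rightarrow> bool" where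
  top: "card (nodes Z) \<ge> 2 \<Longrightarrow> decomp_partition Z P \<Longrightarrow> decomp_quotient Z (quotient Z P)"
| factor: "card (nodes Z) \<ge> 2 \<Longrightarrow> decomp_partition Z P \<Longrightarrow> S \<in> P \<Longrightarrow> card S \<ge> 2 \<Longrightarrow>
     decomp_quotient (induced Z S) Q \<Longrightarrow> decomp_quotient Z Q"

end

theory Submission
  imports Defs
begin

text \<open>Quotients by uniform paths are uniform paths by construction, so only the quotients by
  a maximal modular partition P need an argument. The key observation is that modules lift
  along quotients: if A is a module of Z/P for a modular partition P, then the union of the
  blocks in A is a module of Z, whose source is the source of the source block of A. For a
  nontrivial module A of Z/P this union would be a proper module of Z strictly containing the
  maximal module that is the source block of A, which is impossible. None of the
  decision-structure axioms is needed for this.\<close>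

lemma nodes_quotient [simp]: "nodes (quotient Z P) = P"
  by (simp add: quotient_def nodes_def)

lemma larcs_quotient:
  "(S, r, T) \<in> larcs (quotient Z P) \<longleftrightarrow>
     S \<in> P \<and> T \<in> P \<and> S \<noteq> T \<and> (\<exists>u \<in> S. \<exists>v \<in> T. (u, r, v) \<in> larcs Z)"
  by (simp add: quotient_def larcs_def)

lemma is_source_induced:
  "is_source (induced Z X) s \<longleftrightarrow> s \<in> X \<and> (\<forall>u r. u \<in> X \<longrightarrow> (u, r, s) \<notin> larcs Z)"
  by (auto simp: is_source_def induced_def nodes_def arcs_def larcs_def)

lemma is_source_source: "unique_source Z \<Longrightarrow> is_source Z (source Z)"
  unfolding unique_source_def source_def by (rule theI')

lemma source_eqI: "unique_source Z \<Longrightarrow> is_source Z s \<Longrightarrow> source Z = s"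
  unfolding unique_source_def source_def by (metis the_equality)

lemma module_arc_into:
  assumes "is_module Z X" "v \<in> nodes Z" "v \<notin> X" "x \<in> X" "(v, r, x) \<in> larcs Z"
  shows "x = source (induced Z X)"
  using assms unfolding is_module_def arcs_def by blast

lemma module_arc_out_of:
  assumes "is_module Z X" "v \<in> nodes Z" "v \<notin> X" "x \<in> X" "(x, r, v) \<in> larcs Z" "x' \<in> X"
  shows "(\<exists>w. (x', r, w) \<in> larcs Z) \<and> (\<forall>w. (x', r, w) \<in> larcs Z \<longrightarrow> w = v \<or> w \<in> X)"
  using assms unfolding is_module_def by blast

context
  fixes Z :: "('n, 'r) lgraph" and P :: "'n set set" and A :: "'n set set"
  assumes modular: "modular_partition Z P"
    and quotient_module: "is_module (quotient Z P) A"
begin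

private lemma block_is_module: "S \<in> P \<Longrightarrow> is_module Z S"
  using modular by (simp add: modular_partition_def)

private lemma Union_blocks: "\<Union>P = nodes Z"
  using modular by (simp add: modular_partition_def is_partition_def)

private lemma block_unique: "S \<in> P \<Longrightarrow> T \<in> P \<Longrightarrow> x \<in> S \<Longrightarrow> x \<in> T \<Longrightarrow> S = T"
  using modular unfolding modular_partition_def is_partition_def by blast

private lemma blocks_subset: "A \<subseteq> P"
  using quotient_module by (simp add: is_module_def)

private lemma Union_subset_nodes: "\<Union>A \<subseteq> nodes Z"
  using blocks_subset Union_blocks by blast

private lemma quotient_source_block:
  "source (induced (quotient Z P) A) \<in> A"
  "\<And>U r. U \<in> A \<Longrightarrow> (U, r, source (induced (quotient Z P) A)) \<notin> larcs (quotient Z P)"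
proof -
  have "is_source (induced (quotient Z P) A) (source (induced (quotient Z P) A))"
    using quotient_module by (simp add: is_module_def is_source_source)
  then show "source (induced (quotient Z P) A) \<in> A"
    "\<And>U r. U \<in> A \<Longrightarrow> (U, r, source (induced (quotient Z P) A)) \<notin> larcs (quotient Z P)"
    by (auto simp: is_source_induced)
qed

private lemma quotient_arc_into:
  "V \<in> P \<Longrightarrow> V \<notin> A \<Longrightarrow> T \<in> A \<Longrightarrow> (V, r, T) \<in> larcs (quotient Z P) \<Longrightarrow>
     T = source (induced (quotient Z P) A)"
  using module_arc_into[OF quotient_module] by simp

private lemma quotient_arc_out_of:
  "V \<in> P \<Longrightarrow> V \<notin> A \<Longrightarrow> T \<in> A \<Longrightarrow> (T, r, V) \<in> larcs (quotient Z P) \<Longrightarrow> T' \<in> A \<Longrightarrow>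
     (\<exists>W. (T', r, W) \<in> larcs (quotient Z P)) \<and>
     (\<forall>W. (T', r, W) \<in> larcs (quotient Z P) \<longrightarrow> W = V \<or> W \<in> A)"
  using module_arc_out_of[OF quotient_module] by simp

lemma is_source_Union_quotient_module:
  "is_source (induced Z (\<Union>A)) (source (induced Z (source (induced (quotient Z P) A))))"
proof -
  define S0 where "S0 = source (induced (quotient Z P) A)"
  have S0: "S0 \<in> A" "S0 \<in> P"
    using quotient_source_block(1) blocks_subset by (auto simp: S0_def)
  have "is_source (induced Z S0) (source (induced Z S0))"
    using block_is_module[OF S0(2)] by (simp add: is_module_def is_source_source)
  then have s0: "source (induced Z S0) \<in> S0"
    "\<And>u r. u \<in> S0 \<Longrightarrow> (u, r, source (induced Z S0)) \<notin> larcs Z"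
    by (auto simp: is_source_induced)
  have "(u, r, source (induced Z S0)) \<notin> larcs Z" if "U \<in> A" "u \<in> U" for U u r
  proof (cases "U = S0")
    case False
    with that S0 s0(1) blocks_subset
    have "(u, r, source (induced Z S0)) \<in> larcs Z \<Longrightarrow> (U, r, S0) \<in> larcs (quotient Z P)"
      by (auto simp: larcs_quotient)
    with quotient_source_block(2) \<open>U \<in> A\<close> show ?thesis by (auto simp: S0_def)
  qed (use that s0 in simp)
  with s0(1) S0(1) show ?thesis
    by (auto simp: is_source_induced S0_def)
qed

lemma unique_source_Union_quotient_module: "unique_source (induced Z (\<Union>A))"
proof -
  let ?s = "source (induced Z (source (induced (quotient Z P) A)))"
  have "y = ?s" if y: "is_source (induced Z (\<Union>A)) y" for y
  proof -
    from y obtain T where T: "T \<in> A" "y \<in> T"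
      and no_arc: "\<And>u r. u \<in> \<Union>A \<Longrightarrow> (u, r, y) \<notin> larcs Z"
      by (auto simp: is_source_induced)
    have TP: "T \<in> P" using T blocks_subset by auto
    have usT: "unique_source (induced Z T)"
      using block_is_module[OF TP] by (simp add: is_module_def)
    have y_source: "source (induced Z T) = y"
      using T no_arc by (intro source_eqI[OF usT]) (auto simp: is_source_induced)
    show ?thesis
    proof (cases "T = source (induced (quotient Z P) A)")
      case True
      with y_source show ?thesis by simp
    next
      case False
      have "unique_source (induced (quotient Z P) A)"
        using quotient_module by (simp add: is_module_def)
      with False source_eqI have "\<not> is_source (induced (quotient Z P) A) T" by metis
      then obtain U r where "U \<in> A" "(U, r, T) \<in> larcs (quotient Z P)"
        using T by (auto simp: is_source_induced)
      then obtain u t where ut: "u \<in> U" "t \<in> T" "(u, r, t) \<in> larcs Z" "U \<noteq> T" "U \<in> P"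
        by (auto simp: larcs_quotient)
      have "u \<notin> T" using ut TP block_unique by blast
      moreover have "u \<in> nodes Z" using ut Union_blocks by blast
      ultimately have "t = y"
        using module_arc_into[OF block_is_module[OF TP]] ut y_source by blast
      with no_arc ut \<open>U \<in> A\<close> show ?thesis by blast
    qed
  qed
  with is_source_Union_quotient_module show ?thesis
    unfolding unique_source_def by blast
qed

lemma source_Union_quotient_module:
  "source (induced Z (\<Union>A)) = source (induced Z (source (induced (quotient Z P) A)))"
  by (rule source_eqI[OF unique_source_Union_quotient_module is_source_Union_quotient_module])

lemma arc_into_Union_quotient_module:
  assumes v: "v \<in> nodes Z" "v \<notin> \<Union>A" and x: "x \<in> \<Union>A" and arc: "(v, r, x) \<in> larcs Z"
  shows "x = source (induced Z (\<Union>A))"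
proof -
  obtain T where T: "T \<in> A" "x \<in> T" "T \<in> P" using x blocks_subset by blast
  obtain V where V: "V \<in> P" "v \<in> V" using v Union_blocks by blast
  have "V \<notin> A" using V v by blast
  with V T arc have "(V, r, T) \<in> larcs (quotient Z P)"
    by (auto simp: larcs_quotient)
  with V \<open>V \<notin> A\<close> T have "T = source (induced (quotient Z P) A)"
    using quotient_arc_into by blast
  moreover have "x = source (induced Z T)"
    using module_arc_into[OF block_is_module] v T arc blocks_subset by blast
  ultimately show ?thesis
    using source_Union_quotient_module by simp
qed

lemma arc_out_of_Union_quotient_module:
  assumes v: "v \<in> nodes Z" "v \<notin> \<Union>A" and x: "x \<in> \<Union>A" and arc: "(x, r, v) \<in> larcs Z"
    and x': "x' \<in> \<Union>A"
  shows "(\<exists>w. (x', r, w) \<in> larcs Z) \<and> (\<forall>w. (x', r, w) \<in> larcs Z \<longrightarrow> w = v \<or> w \<in> \<Union>A)"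
proof -
  obtain T where T: "T \<in> A" "x \<in> T" "T \<in> P" using x blocks_subset by blast
  obtain T' where T': "T' \<in> A" "x' \<in> T'" "T' \<in> P" using x' blocks_subset by blast
  obtain V where V: "V \<in> P" "v \<in> V" "V \<notin> A" using v Union_blocks by blast
  have vT: "v \<notin> T" using v T by blast
  have quotient_arc: "(T, r, V) \<in> larcs (quotient Z P)"
    using V T arc by (auto simp: larcs_quotient)
  have "x \<notin> V" using T V block_unique by blast
  then have v_source: "v = source (induced Z V)"
    using module_arc_into[OF block_is_module[OF V(1)] _ _ V(2) arc] x Union_subset_nodes by blast
  show ?thesis
  proof (cases "T' = T")
    case True
    then show ?thesis
      using module_arc_out_of[OF block_is_module[OF T(3)] v(1) vT T(2) arc] T' T by blast
  next
    case False
    from quotient_arc_out_of[OF V(1,3) T(1) quotient_arc T'(1)]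
    obtain W where W: "(T', r, W) \<in> larcs (quotient Z P)" and WVA: "W = V \<or> W \<in> A"
      by blast
    then obtain u w where uw: "u \<in> T'" "w \<in> W" "(u, r, w) \<in> larcs Z" "T' \<noteq> W" "W \<in> P"
      by (auto simp: larcs_quotient)
    have "w \<notin> T'" and "w \<in> nodes Z"
      using uw T' block_unique Union_blocks by blast+
    note out = module_arc_out_of[OF block_is_module[OF T'(3)] this(2,1) uw(1,3) T'(2)]
    have "w = v \<or> w \<in> \<Union>A"
    proof (cases "W = V")
      case True
      have "u \<notin> V" using uw True T' V block_unique by blast
      moreover have "u \<in> nodes Z" using uw T' Union_blocks by blast
      ultimately show ?thesis
        using module_arc_into[OF block_is_module[OF V(1)]] uw True v_source by blast
    qed (use WVA uw in blast)
    with out T' show ?thesis by blast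
  qed
qed

lemma is_module_Union_quotient_module: "is_module Z (\<Union>A)"
  unfolding is_module_def
proof (intro conjI ballI allI impI)
  fix v x assume "v \<in> nodes Z - \<Union>A" "x \<in> \<Union>A" "(v, x) \<in> arcs Z"
  then show "x = source (induced Z (\<Union>A))"
    using arc_into_Union_quotient_module by (auto simp: arcs_def)
next
  fix v x r x' assume "v \<in> nodes Z - \<Union>A" "x \<in> \<Union>A" "(x, r, v) \<in> larcs Z" "x' \<in> \<Union>A"
  then show "\<exists>w. (x', r, w) \<in> larcs Z" and
    "\<And>w. (x', r, w) \<in> larcs Z \<Longrightarrow> w = v \<or> w \<in> \<Union>A"
    using arc_out_of_Union_quotient_module[of v x r x'] by blast+
qed (use Union_subset_nodes unique_source_Union_quotient_module in auto)

end

lemma maximal_partition_quotient_prime: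
  assumes maximal: "maximal_partition Z P"
  shows "prime (quotient Z P)"
  unfolding prime_def
proof (intro allI impI)
  fix A assume A: "is_module (quotient Z P) A"
  have nonempty: "\<And>S. S \<in> P \<Longrightarrow> S \<noteq> {}" and Union_P: "\<Union>P = nodes Z"
    and disjoint: "\<And>S T. S \<in> P \<Longrightarrow> T \<in> P \<Longrightarrow> S \<noteq> T \<Longrightarrow> S \<inter> T = {}"
    and max: "\<And>S. S \<in> P \<Longrightarrow> maximal_module Z S"
    using maximal by (simp_all add: maximal_partition_def is_partition_def)
  then have modular: "modular_partition Z P"
    using maximal by (simp add: modular_partition_def maximal_partition_def maximal_module_def)
  have AP: "A \<subseteq> P" using A by (simp add: is_module_def)
  define S0 where "S0 = source (induced (quotient Z P) A)"
  have "is_source (induced (quotient Z P) A) S0"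
    using A by (simp add: S0_def is_module_def is_source_source)
  then have S0: "S0 \<in> A" by (simp add: is_source_induced)
  show "trivial_module (quotient Z P) A"
  proof (rule ccontr)
    assume "\<not> trivial_module (quotient Z P) A"
    then have "A \<noteq> P" "A \<noteq> {S0}"
      using S0 AP by (auto simp: trivial_module_def)
    then obtain B T where B: "B \<in> P" "B \<notin> A" and T: "T \<in> A" "T \<noteq> S0"
      using AP S0 by blast
    obtain b t where b: "b \<in> B" and t: "t \<in> T"
      using nonempty B T AP by blast
    have "b \<notin> \<Union>A"
      using b B AP disjoint by blast
    moreover have "b \<in> nodes Z"
      using b B Union_P by blast
    moreover have "t \<notin> S0"
      using t T S0 AP disjoint by blast
    moreover have "\<Union>A = S0 \<or> \<Union>A = nodes Z"
      using max[of S0] S0 AP is_module_Union_quotient_module[OF modular A]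
      unfolding maximal_module_def by blast
    ultimately show False using t T by blast
  qed
qed

theorem mainTheorem7:
  fixes Z :: "('n, 'r) lgraph" and Q :: "('n set, 'r) lgraph"
  assumes "decision_structure Z"
    and "decomp_quotient Z Q"
  shows "prime Q \<or> uniform_path3 Q"
  using assms(2)
proof (induction rule: decomp_quotient.induct)
  case (top Z P)
  then consider "case1_partition Z P" | "case2_partition Z P"
    by (auto simp: decomp_partition_def split: if_splits)
  then show ?case
    by cases (auto simp: case1_partition_def case2_partition_def path_candidate_def
      intro: maximal_partition_quotient_prime)
next
  case (factor Z P S Q)
  then show ?case by simp
qed

end
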